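(* Let $m\geq 3$ and let $S(m)$ be the star with center $r$ and leaves $1,2,\dots,m$, with variables $x_r,x_1,\dots,x_m$. Then $\gamma(S(m))=2$; for each $1\leq k\leq m-2$, \[ I_{2+k}(S(m),X)=\left\langle \prod_{s=1}^k x_{j_s}\;\middle|\; 1\leq j_1<\cdots<j_k\leq m\right\rangle; \] and \[ I_{m+1}(S(m),X)=\Big\langle x_rx_1\cdots x_m-\sum_{i=1}^m \prod_{j\neq i} x_j\Big\rangle. \]
   Context: For a graph $G$ with vertex set $V$, $L(G,X_G)$ is the matrix with diagonal entries $x_u$ ($u\in V$) and off-diagonal entries $-m_{uv}$, $m_{uv}$ the number of edges between $u$ and $v$; $I_j(G,X_G)\subseteq\mathbb{Z}[X_G]$ is the ideal generated by all $j\times j$ minors of $L(G,X_G)$, and $\gamma(G)=\max\{j\mid I_j(G,X_G)=\mathbb{Z}[X_G]\}$. *)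

theory Defs
  imports "HOL-Library.Poly_Mapping" "Jordan_Normal_Form.Determinant" "Jordan_Normal_Form.DL_Submatrix"
begin

text \<open>Multivariate integer polynomials Z[X]: variables indexed by nat (vertex names),
  monomials are finitely supported exponent maps.\<close>
type_synonym zpoly = "(nat \<Rightarrow>\<^sub>0 nat) \<Rightarrow>\<^sub>0 int"

definition Var :: "nat \<Rightarrow> zpoly" where
  "Var i = Poly_Mapping.single (Poly_Mapping.single i 1) 1"

definition ideal_gen :: "'a::comm_ring_1 set \<Rightarrow> 'a set" where
  "ideal_gen S = {x. \<exists>F c. finite F \<and> F \<subseteq> S \<and> x = (\<Sum>s\<in>F. c s * s)}"

text \<open>A multigraph on vertex set {0..<n} given by the multiplicity function mu
  (mu u v = number of edges between u and v). Generalized Laplacian L(G,X_G).\<close>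
definition genlap :: "nat \<Rightarrow> (nat \<Rightarrow> nat \<Rightarrow> nat) \<Rightarrow> zpoly mat" where
  "genlap n mu = mat n n (\<lambda>(u,v). if u = v then Var u else - of_nat (mu u v))"

definition minors :: "'a::comm_ring_1 mat \<Rightarrow> nat \<Rightarrow> 'a set" where
  "minors A j = {det (submatrix A I J) | I J.
      I \<subseteq> {..<dim_row A} \<and> J \<subseteq> {..<dim_col A} \<and> card I = j \<and> card J = j}"

definition crit_ideal :: "nat \<Rightarrow> (nat \<Rightarrow> nat \<Rightarrow> nat) \<Rightarrow> nat \<Rightarrow> zpoly set" where
  "crit_ideal n mu j = ideal_gen (minors (genlap n mu) j)"

definition algco :: "nat \<Rightarrow> (nat \<Rightarrow> nat \<Rightarrow> nat) \<Rightarrow> nat" where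
  "algco n mu = (GREATEST j. crit_ideal n mu j = UNIV)"

text \<open>Star S(m): center r = vertex 0, leaves 1..m; vertex set {0..<m+1}.\<close>
definition star_mu :: "nat \<Rightarrow> nat \<Rightarrow> nat" where
  "star_mu u v = (if u \<noteq> v \<and> (u = 0 \<or> v = 0) then 1 else 0)"

end

theory Submission
  imports Defs
begin

text \<open>Let L be the generalized Laplacian of the star with centre 0.  An off-diagonal entry
  L(u,v) vanishes unless u or v is the centre, so a nonvanishing term in the Leibniz expansion
  of a (k+2)-minor moves at most two rows -- the centre's row and the row sent to the centre's
  column -- and therefore contains k diagonal leaf variables.  Conversely, the minor with rows
  {0,i} \<union> T and columns {0,j} \<union> T has exactly one nonvanishing term, namely plus or minus the
  product of the x_t for t \<in> T.  For k \<ge> 1 these generators have zero constant term, so the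
  ideals are proper and \<gamma> = 2.  The only nonvanishing terms of det L come from the identity
  and the transpositions (0 i), which gives the generator of the top ideal.\<close>

lemma ideal_gen_in: "s \<in> S \<Longrightarrow> s \<in> ideal_gen S"
  unfolding ideal_gen_def by (intro CollectI exI[of _ "{s}"] exI[of _ "\<lambda>_. 1"]) auto

lemma ideal_gen_0: "0 \<in> ideal_gen S"
  unfolding ideal_gen_def by (intro CollectI exI[of _ "{}"]) auto

lemma ideal_gen_add:
  assumes "x \<in> ideal_gen S" "y \<in> ideal_gen S"
  shows "x + y \<in> ideal_gen S"
proof -
  obtain F c where F: "finite F" "F \<subseteq> S" and x: "x = (\<Sum>s\<in>F. c s * s)"
    using assms(1) unfolding ideal_gen_def by auto
  obtain G d where G: "finite G" "G \<subseteq> S" and y: "y = (\<Sum>s\<in>G. d s * s)"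
    using assms(2) unfolding ideal_gen_def by auto
  have extend: "(\<Sum>s\<in>F \<union> G. (if s \<in> H then a s else 0) * s) = (\<Sum>s\<in>H. a s * s)"
    if "H \<subseteq> F \<union> G" for H a
  proof -
    have "(\<Sum>s\<in>F \<union> G. (if s \<in> H then a s else 0) * s) = (\<Sum>s\<in>F \<union> G. if s \<in> H then a s * s else 0)"
      by (intro sum.cong) auto
    also have "\<dots> = (\<Sum>s\<in>H. a s * s)"
      using sum.inter_restrict[of "F \<union> G" "\<lambda>s. a s * s" H] F G that by (simp add: Int_absorb1)
    finally show ?thesis .
  qed
  define e where "e s = (if s \<in> F then c s else 0) + (if s \<in> G then d s else 0)" for s
  have "x + y = (\<Sum>s\<in>F \<union> G. e s * s)"
    unfolding e_def distrib_right sum.distrib x y by (simp add: extend)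
  then show ?thesis
    unfolding ideal_gen_def by (intro CollectI exI[of _ "F \<union> G"] exI[of _ e]) (use F G in auto)
qed

lemma ideal_gen_mult:
  assumes "x \<in> ideal_gen S"
  shows "r * x \<in> ideal_gen S"
proof -
  obtain F c where F: "finite F" "F \<subseteq> S" and x: "x = (\<Sum>s\<in>F. c s * s)"
    using assms unfolding ideal_gen_def by auto
  have "r * x = (\<Sum>s\<in>F. (r * c s) * s)"
    unfolding x sum_distrib_left by (simp add: mult.assoc)
  then show ?thesis
    unfolding ideal_gen_def by (intro CollectI exI[of _ F] exI[of _ "\<lambda>s. r * c s"]) (use F in auto)
qed

lemma ideal_gen_sum:
  assumes "\<And>a. a \<in> A \<Longrightarrow> f a \<in> ideal_gen S"
  shows "sum f A \<in> ideal_gen S"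
  using assms by (induction A rule: infinite_finite_induct) (simp_all add: ideal_gen_0 ideal_gen_add)

lemma ideal_gen_least:
  assumes "S \<subseteq> ideal_gen T"
  shows "ideal_gen S \<subseteq> ideal_gen T"
proof
  fix x assume "x \<in> ideal_gen S"
  then obtain F c where "F \<subseteq> S" and "x = (\<Sum>s\<in>F. c s * s)"
    unfolding ideal_gen_def by auto
  then show "x \<in> ideal_gen T"
    using assms by (auto intro!: ideal_gen_sum ideal_gen_mult)
qed

lemma ideal_gen_eq_UNIV: "1 \<in> ideal_gen S \<Longrightarrow> ideal_gen S = UNIV"
  by (metis UNIV_eq_I ideal_gen_mult mult.right_neutral)

definition const_coeff :: "zpoly \<Rightarrow> int" where
  "const_coeff p = Poly_Mapping.lookup p 0"

lemma poly_mapping_add_eq_0_iff: "(l :: nat \<Rightarrow>\<^sub>0 nat) + r = 0 \<longleftrightarrow> l = 0 \<and> r = 0"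
  by (metis (mono_tags) add_eq_0_iff_both_eq_0 lookup_add lookup_zero poly_mapping_eqI add_0)

lemma const_coeff_mult: "const_coeff (p * q) = const_coeff p * const_coeff q"
proof -
  have "Sum_any (\<lambda>r. Poly_Mapping.lookup q r when 0 = l + r) = (Poly_Mapping.lookup q 0 when l = 0)"
    for l :: "nat \<Rightarrow>\<^sub>0 nat"
  proof -
    have "Sum_any (\<lambda>r. Poly_Mapping.lookup q r when 0 = l + r)
        = Sum_any (\<lambda>r. (Poly_Mapping.lookup q 0 when l = 0) when r = (0 :: nat \<Rightarrow>\<^sub>0 nat))"
      by (intro arg_cong[where f = Sum_any] ext) (auto simp: poly_mapping_add_eq_0_iff when_def)
    also have "\<dots> = (Poly_Mapping.lookup q 0 when l = 0)"
      by (rule Sum_any_when_equal)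
    finally show ?thesis .
  qed
  then show ?thesis
    unfolding const_coeff_def lookup_mult by (simp add: mult_when Sum_any_when_equal)
qed

lemma const_coeff_one: "const_coeff 1 = 1"
  by (simp add: const_coeff_def)

lemma const_coeff_prod: "const_coeff (prod f A) = (\<Prod>a\<in>A. const_coeff (f a))"
  by (induction A rule: infinite_finite_induct) (simp_all add: const_coeff_mult const_coeff_one)

lemma const_coeff_Var: "const_coeff (Var i) = 0"
proof -
  have "Poly_Mapping.single i (1 :: nat) \<noteq> 0"
    by (metis lookup_single_eq lookup_zero one_neq_zero)
  then show ?thesis
    unfolding const_coeff_def Var_def by (simp add: lookup_single_not_eq)
qed

lemma const_coeff_ideal_gen:
  assumes "\<And>s. s \<in> S \<Longrightarrow> const_coeff s = 0" and "x \<in> ideal_gen S"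
  shows "const_coeff x = 0"
proof -
  obtain F c where "F \<subseteq> S" and x: "x = (\<Sum>s\<in>F. c s * s)"
    using assms(2) unfolding ideal_gen_def by auto
  then show ?thesis
    using assms(1) unfolding x const_coeff_def lookup_sum
    by (auto simp: const_coeff_mult[unfolded const_coeff_def] intro!: sum.neutral)
qed

section \<open>Minors as sums over bijections\<close>

lemma bij_betw_pick:
  assumes "finite I"
  shows "bij_betw (pick I) {0..<card I} I"
proof -
  have inj: "inj_on (pick I) {0..<card I}"
    using pick_mono by (intro linorder_inj_onI') (metis atLeastLessThan_iff order_less_irrefl)
  have "pick I ` {0..<card I} \<subseteq> I"
    using pick_in_set by auto
  then have "pick I ` {0..<card I} = I"
    using card_subset_eq[OF assms] card_image[OF inj] by simp
  with inj show ?thesis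
    unfolding bij_betw_def by simp
qed

lemma submatrix_carrier:
  assumes "A \<in> carrier_mat n n" "I \<subseteq> {..<n}" "J \<subseteq> {..<n}"
  shows "submatrix A I J \<in> carrier_mat (card I) (card J)"
proof -
  have "dim_row A = n" "dim_col A = n"
    using assms(1) by auto
  moreover have "{i. i < n \<and> i \<in> I} = I" "{j. j < n \<and> j \<in> J} = J"
    using assms(2,3) by auto
  ultimately show ?thesis
    unfolding carrier_mat_def by (simp add: dim_submatrix)
qed

lemma submatrix_index_subset:
  assumes "A \<in> carrier_mat n n" "I \<subseteq> {..<n}" "J \<subseteq> {..<n}" "i < card I" "j < card J"
  shows "submatrix A I J $$ (i, j) = A $$ (pick I i, pick J j)"
proof -
  have "dim_row A = n" "dim_col A = n"
    using assms(1) by auto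
  moreover have "{i. i < n \<and> i \<in> I} = I" "{j. j < n \<and> j \<in> J} = J"
    using assms(2,3) by auto
  ultimately show ?thesis
    using assms(4,5) by (intro submatrix_index) simp_all
qed

lemma submatrix_lessThan:
  assumes A: "A \<in> carrier_mat n n"
  shows "submatrix A {..<n} {..<n} = A"
proof (rule eq_matI)
  have pick: "pick {..<n} i = i" if "i < n" for i
  proof -
    have "{a \<in> {..<n}. a < i} = {..<i}"
      using that by auto
    then show ?thesis
      using pick_card_in_set[of i "{..<n}"] that by simp
  qed
  have "submatrix A {..<n} {..<n} \<in> carrier_mat n n"
    using submatrix_carrier[OF A, of "{..<n}" "{..<n}"] by simp
  then show "dim_row (submatrix A {..<n} {..<n}) = dim_row A"
    and "dim_col (submatrix A {..<n} {..<n}) = dim_col A"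
    using A by auto
  fix i j assume "i < dim_row A" "j < dim_col A"
  then have "i < n" "j < n"
    using A by auto
  then show "submatrix A {..<n} {..<n} $$ (i, j) = A $$ (i, j)"
    using submatrix_index_subset[OF A, of "{..<n}" "{..<n}" i j] pick by simp
qed

lemma minors_carrier:
  assumes "A \<in> carrier_mat n n"
  shows "minors A j = {det (submatrix A I J) | I J.
      I \<subseteq> {..<n} \<and> J \<subseteq> {..<n} \<and> card I = j \<and> card J = j}"
  using assms unfolding minors_def by simp

lemma minors_full:
  assumes "A \<in> carrier_mat n n"
  shows "minors A n = {det A}"
proof -
  have full: "I = {..<n}" if "I \<subseteq> {..<n}" "card I = n" for I
    using card_subset_eq[OF finite_lessThan that(1)] that(2) by simp
  have "minors A n = {det (submatrix A {..<n} {..<n})}"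
  proof (intro equalityI subsetI)
    fix x assume "x \<in> minors A n"
    then obtain I J where "I \<subseteq> {..<n}" "J \<subseteq> {..<n}" "card I = n" "card J = n"
      and x: "x = det (submatrix A I J)"
      unfolding minors_carrier[OF assms] by auto
    then have "I = {..<n}" "J = {..<n}"
      using full by blast+
    then show "x \<in> {det (submatrix A {..<n} {..<n})}"
      using x by simp
  next
    fix x assume "x \<in> {det (submatrix A {..<n} {..<n})}"
    moreover have "{..<n} \<subseteq> {..<n}" "card {..<n} = n"
      by simp_all
    ultimately show "x \<in> minors A n"
      unfolding minors_carrier[OF assms] by (auto intro!: exI[of _ "{..<n}"])
  qed
  then show ?thesis
    by (simp add: submatrix_lessThan[OF assms])
qed

text \<open>A permutation \<open>p\<close> of the indices of \<open>submatrix A I J\<close>, read as a bijection from the rows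
  \<open>I\<close> to the columns \<open>J\<close> of \<open>A\<close>.\<close>

definition lift_perm :: "nat set \<Rightarrow> nat set \<Rightarrow> (nat \<Rightarrow> nat) \<Rightarrow> nat \<Rightarrow> nat" where
  "lift_perm I J p u = pick J (p (inv_into {0..<card I} (pick I) u))"

lemma lift_perm_pick:
  assumes "finite I" "i < card I"
  shows "lift_perm I J p (pick I i) = pick J (p i)"
  using bij_betw_pick[OF assms(1)] assms(2) by (simp add: lift_perm_def bij_betw_def inv_into_f_f)

lemma bij_betw_lift_perm:
  assumes "finite I" "finite J" "card I = card J" "p permutes {0..<card I}"
  shows "bij_betw (lift_perm I J p) I J"
proof -
  have "bij_betw (pick J \<circ> p \<circ> inv_into {0..<card I} (pick I)) I J"
    using bij_betw_inv_into[OF bij_betw_pick[OF assms(1)]] permutes_imp_bij[OF assms(4)]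
      bij_betw_pick[OF assms(2)] assms(3)
    by (auto intro: bij_betw_trans)
  then show ?thesis
    by (simp add: lift_perm_def[abs_def] comp_def)
qed

lemma prod_submatrix_lift_perm:
  assumes A: "A \<in> carrier_mat n n" and IJ: "I \<subseteq> {..<n}" "J \<subseteq> {..<n}" "card I = card J"
    and p: "p permutes {0..<card I}"
  shows "(\<Prod>i = 0..<card I. submatrix A I J $$ (i, p i)) = (\<Prod>u\<in>I. A $$ (u, lift_perm I J p u))"
proof -
  have fin: "finite I" using IJ(1) finite_subset by blast
  have "(\<Prod>u\<in>I. A $$ (u, lift_perm I J p u)) = (\<Prod>i = 0..<card I. A $$ (pick I i, pick J (p i)))"
    using prod.reindex_bij_betw[OF bij_betw_pick[OF fin], of "\<lambda>u. A $$ (u, lift_perm I J p u)"]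
    by (simp add: lift_perm_pick[OF fin])
  also have "\<dots> = (\<Prod>i = 0..<card I. submatrix A I J $$ (i, p i))"
    using p IJ by (intro prod.cong) (auto simp: submatrix_index_subset[OF A] permutes_in_image)
  finally show ?thesis ..
qed

lemma lift_perm_inj:
  assumes "finite I" "finite J" "card I = card J"
    and "p permutes {0..<card I}" "q permutes {0..<card I}"
    and "\<forall>u\<in>I. lift_perm I J p u = lift_perm I J q u"
  shows "p = q"
proof
  fix i
  show "p i = q i"
  proof (cases "i < card I")
    case True
    have "pick I i \<in> I"
      using bij_betw_pick[OF assms(1)] True by (auto simp: bij_betw_def)
    then have "pick J (p i) = pick J (q i)"
      using assms(6) lift_perm_pick[OF assms(1) True] by metis
    then show ?thesis
      using bij_betw_pick[OF assms(2)] assms(3-5) True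
      by (auto simp: bij_betw_def permutes_in_image dest: inj_onD)
  next
    case False
    then show ?thesis
      using assms(4,5) by (simp add: permutes_not_in)
  qed
qed

lemma lift_perm_surj:
  assumes "finite I" "finite J" "card I = card J" "bij_betw g I J"
  obtains p where "p permutes {0..<card I}" "\<forall>u\<in>I. lift_perm I J p u = g u"
proof
  let ?n = "card I"
  define p where "p i = (if i < ?n then inv_into {0..<?n} (pick J) (g (pick I i)) else i)" for i
  have bJ: "bij_betw (pick J) {0..<?n} J"
    using bij_betw_pick[OF assms(2)] assms(3) by simp
  have "bij_betw (inv_into {0..<?n} (pick J) \<circ> g \<circ> pick I) {0..<?n} {0..<?n}"
    using bij_betw_pick[OF assms(1)] assms(4) bij_betw_inv_into[OF bJ] by (auto intro: bij_betw_trans)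
  then have "bij_betw p {0..<?n} {0..<?n}"
    by (rule bij_betw_cong[THEN iffD1, rotated]) (simp add: p_def)
  then show "p permutes {0..<?n}"
    by (rule bij_imp_permutes) (simp add: p_def)
  show "\<forall>u\<in>I. lift_perm I J p u = g u"
  proof
    fix u assume "u \<in> I"
    then have "u \<in> pick I ` {0..<?n}"
      using bij_betw_pick[OF assms(1)] by (simp add: bij_betw_def)
    then obtain i where i: "i < ?n" "u = pick I i"
      by auto
    have "g u \<in> pick J ` {0..<?n}"
      using assms(4) bJ \<open>u \<in> I\<close> by (auto simp: bij_betw_def)
    then show "lift_perm I J p u = g u"
      using i by (simp add: lift_perm_pick[OF assms(1)] p_def f_inv_into_f)
  qed
qed

lemma det_submatrix_in_ideal_gen:
  assumes A: "A \<in> carrier_mat n n" and IJ: "I \<subseteq> {..<n}" "J \<subseteq> {..<n}" "card I = card J"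
    and terms: "\<And>h. bij_betw h I J \<Longrightarrow> (\<Prod>u\<in>I. A $$ (u, h u)) \<in> ideal_gen S"
  shows "det (submatrix A I J) \<in> ideal_gen S"
proof -
  have fin: "finite I" "finite J" using IJ finite_subset by blast+
  have car: "submatrix A I J \<in> carrier_mat (card I) (card I)"
    using submatrix_carrier[OF A IJ(1,2)] IJ(3) by simp
  show ?thesis
    unfolding det_def'[OF car]
  proof (intro ideal_gen_sum ideal_gen_mult)
    fix p assume "p \<in> {p. p permutes {0..<card I}}"
    then show "(\<Prod>i = 0..<card I. submatrix A I J $$ (i, p i)) \<in> ideal_gen S"
      using terms bij_betw_lift_perm[OF fin IJ(3)] by (simp add: prod_submatrix_lift_perm[OF A IJ])
  qed
qed

lemma det_submatrix_unique_bij: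
  assumes A: "A \<in> carrier_mat n n" and IJ: "I \<subseteq> {..<n}" "J \<subseteq> {..<n}" "card I = card J"
    and g: "bij_betw g I J"
    and unique: "\<And>h. bij_betw h I J \<Longrightarrow> \<forall>u\<in>I. A $$ (u, h u) \<noteq> 0 \<Longrightarrow> \<forall>u\<in>I. h u = g u"
  shows "\<exists>e. (e = 1 \<or> e = -1) \<and> det (submatrix A I J) = e * (\<Prod>u\<in>I. A $$ (u, g u))"
proof -
  have fin: "finite I" "finite J" using IJ finite_subset by blast+
  obtain f where f: "f permutes {0..<card I}" "\<forall>u\<in>I. lift_perm I J f u = g u"
    using lift_perm_surj[OF fin IJ(3) g] .
  define summand where "summand p = signof p * (\<Prod>u\<in>I. A $$ (u, lift_perm I J p u))" for p
  have zero: "summand p = 0" if p: "p permutes {0..<card I}" "p \<noteq> f" for p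
  proof (rule ccontr)
    assume "summand p \<noteq> 0"
    then have "(\<Prod>u\<in>I. A $$ (u, lift_perm I J p u)) \<noteq> 0"
      by (auto simp: summand_def)
    then have "\<forall>u\<in>I. A $$ (u, lift_perm I J p u) \<noteq> 0"
      using prod_zero[OF fin(1), of "\<lambda>u. A $$ (u, lift_perm I J p u)"] by blast
    then have "\<forall>u\<in>I. lift_perm I J p u = lift_perm I J f u"
      using unique[OF bij_betw_lift_perm[OF fin IJ(3) p(1)]] f(2) by simp
    then show False
      using lift_perm_inj[OF fin IJ(3) p(1) f(1)] p(2) by blast
  qed
  have car: "submatrix A I J \<in> carrier_mat (card I) (card I)"
    using submatrix_carrier[OF A IJ(1,2)] IJ(3) by simp
  have "det (submatrix A I J) = (\<Sum>p\<in>{p. p permutes {0..<card I}}. summand p)"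
    unfolding det_def'[OF car] summand_def by (simp add: prod_submatrix_lift_perm[OF A IJ])
  also have "\<dots> = summand f"
    using f(1) zero by (simp add: sum.remove[of _ f] finite_permutations sum.neutral)
  also have "\<dots> = signof f * (\<Prod>u\<in>I. A $$ (u, g u))"
    using f(2) by (simp add: summand_def)
  finally show ?thesis
    using signof_pm_one[of f] by auto
qed

section \<open>The generalized Laplacian of the star\<close>

abbreviation star_lap :: "nat \<Rightarrow> zpoly mat" where
  "star_lap m \<equiv> genlap (m + 1) star_mu"

definition leaf_monomials :: "nat \<Rightarrow> nat \<Rightarrow> zpoly set" where
  "leaf_monomials m k = {(\<Prod>s\<in>J. Var s) | J. J \<subseteq> {1..m} \<and> card J = k}"

lemma genlap_carrier: "genlap n mu \<in> carrier_mat n n"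
  unfolding genlap_def by simp

lemma genlap_star_entry:
  "u < n \<Longrightarrow> v < n \<Longrightarrow>
    genlap n star_mu $$ (u, v) = (if u = v then Var u else if u = 0 \<or> v = 0 then -1 else 0)"
  unfolding genlap_def star_mu_def by simp

lemma genlap_star_nonzero:
  "u < n \<Longrightarrow> v < n \<Longrightarrow> genlap n star_mu $$ (u, v) \<noteq> 0 \<Longrightarrow> u = v \<or> u = 0 \<or> v = 0"
  by (auto simp: genlap_star_entry split: if_splits)

lemma prod_Var_in_leaf_monomials:
  assumes "U \<subseteq> {1..m}" "k \<le> card U"
  shows "(\<Prod>u\<in>U. Var u) \<in> ideal_gen (leaf_monomials m k)"
proof -
  have fin: "finite U" using assms(1) finite_subset by blast
  obtain T where T: "T \<subseteq> U" "card T = k"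
    using obtain_subset_with_card_n[OF assms(2)] by blast
  have "(\<Prod>u\<in>T. Var u) \<in> leaf_monomials m k"
    unfolding leaf_monomials_def using T assms(1) by blast
  moreover have "(\<Prod>u\<in>U. Var u) = (\<Prod>u\<in>U - T. Var u) * (\<Prod>u\<in>T. Var u)"
    using prod.subset_diff[OF T(1) fin] .
  ultimately show ?thesis
    by (simp add: ideal_gen_mult ideal_gen_in)
qed

lemma star_lap_term_in_ideal:
  assumes I: "I \<subseteq> {..<m + 1}" and J: "J \<subseteq> {..<m + 1}" and h: "bij_betw h I J"
  shows "(\<Prod>u\<in>I. star_lap m $$ (u, h u)) \<in> ideal_gen (leaf_monomials m (card I - 2))"
proof (cases "\<exists>u\<in>I. star_lap m $$ (u, h u) = 0")
  case True
  have "finite I"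
    using I finite_subset by blast
  with True have "(\<Prod>u\<in>I. star_lap m $$ (u, h u)) = 0"
    by (rule prod_zero[rotated])
  then show ?thesis
    by (simp add: ideal_gen_0)
next
  case False
  have fin: "finite I" using I finite_subset by blast
  define U where "U = {u\<in>I. u \<noteq> 0 \<and> h u \<noteq> 0}"
  have UI: "U \<subseteq> I" by (auto simp: U_def)
  have diag: "star_lap m $$ (u, h u) = Var u" if "u \<in> U" for u
  proof -
    have u: "u \<in> I" "u \<noteq> 0" "h u \<noteq> 0" "u < m + 1" "h u < m + 1"
      using that I J bij_betwE[OF h] by (auto simp: U_def)
    then have "h u = u"
      using genlap_star_nonzero[of u "m + 1" "h u"] False by auto
    then show ?thesis
      using u by (simp add: genlap_star_entry)
  qed
  have inj: "a = b" if "a \<in> I" "b \<in> I" "h a = h b" for a b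
    using inj_onD[OF bij_betw_imp_inj_on[OF h] that(3) that(1,2)] .
  have "card {u\<in>I. h u = 0} \<le> Suc 0"
    using fin by (subst card_le_Suc0_iff_eq) (auto intro: inj)
  then have "card (insert 0 {u\<in>I. h u = 0}) \<le> 2"
    using fin by (simp add: card_insert_if)
  moreover have "I - U \<subseteq> insert 0 {u\<in>I. h u = 0}"
    by (auto simp: U_def)
  ultimately have "card (I - U) \<le> 2"
    using card_mono[of "insert 0 {u\<in>I. h u = 0}" "I - U"] fin by simp
  moreover have "card (I - U) = card I - card U" "card U \<le> card I"
    using card_Diff_subset[OF finite_subset[OF UI fin] UI] card_mono[OF fin UI] by simp_all
  ultimately have "card I - 2 \<le> card U"
    by linarith
  then have "(\<Prod>u\<in>U. Var u) \<in> ideal_gen (leaf_monomials m (card I - 2))"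
    using I by (intro prod_Var_in_leaf_monomials) (auto simp: U_def)
  moreover have "(\<Prod>u\<in>I. star_lap m $$ (u, h u))
      = (\<Prod>u\<in>I - U. star_lap m $$ (u, h u)) * (\<Prod>u\<in>U. Var u)"
    unfolding prod.subset_diff[OF UI fin] using diag by (simp cong: prod.cong)
  ultimately show ?thesis
    by (simp add: ideal_gen_mult)
qed

lemma crit_ideal_star_subset:
  "crit_ideal (m + 1) star_mu s \<subseteq> ideal_gen (leaf_monomials m (s - 2))"
  unfolding crit_ideal_def
proof (rule ideal_gen_least, rule subsetI)
  fix x assume "x \<in> minors (star_lap m) s"
  then obtain I J where IJ: "I \<subseteq> {..<m + 1}" "J \<subseteq> {..<m + 1}" "card I = s" "card J = s"
    and x: "x = det (submatrix (star_lap m) I J)"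
    unfolding minors_carrier[OF genlap_carrier] by blast
  show "x \<in> ideal_gen (leaf_monomials m (s - 2))"
    unfolding x
  proof (rule det_submatrix_in_ideal_gen[OF genlap_carrier IJ(1,2)])
    show "card I = card J"
      using IJ by simp
    fix h assume "bij_betw h I J"
    then show "(\<Prod>u\<in>I. star_lap m $$ (u, h u)) \<in> ideal_gen (leaf_monomials m (s - 2))"
      using star_lap_term_in_ideal[OF IJ(1,2)] IJ(3) by simp
  qed
qed

lemma star_nonzero_bij_unique:
  assumes T: "T \<subseteq> {1..m}" and i: "i \<in> {1..m} - T" and j: "j \<in> {1..m} - T" "i \<noteq> j"
    and h: "bij_betw h (insert 0 (insert i T)) (insert 0 (insert j T))"
    and nz: "\<forall>u\<in>insert 0 (insert i T). star_lap m $$ (u, h u) \<noteq> 0"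
  shows "h 0 = j \<and> h i = 0 \<and> (\<forall>t\<in>T. h t = t)"
proof -
  let ?I = "insert 0 (insert i T)" and ?J = "insert 0 (insert j T)"
  have T0: "0 \<notin> T" using T by auto
  have hJ: "h u \<in> ?J" if "u \<in> ?I" for u
    using bij_betwE[OF h] that by (rule bspec)
  have inj: "u = v" if "u \<in> ?I" "v \<in> ?I" "h u = h v" for u v
    using inj_onD[OF bij_betw_imp_inj_on[OF h] that(3) that(1,2)] .
  have leaf: "h u = u \<or> h u = 0" if "u \<in> ?I" "u \<noteq> 0" for u
  proof -
    have "u < m + 1" "h u < m + 1"
      using that hJ[OF that(1)] T i j by auto
    then show ?thesis
      using genlap_star_nonzero[of u "m + 1" "h u"] nz that by auto
  qed
  have hi: "h i = 0"
    using leaf[of i] hJ[of i] i j by auto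
  have hT: "h t = t" if "t \<in> T" for t
    using leaf[of t] inj[of t i] hi that i T0 by auto
  have h0: "h 0 \<noteq> 0"
    using inj[of 0 i] hi i by auto
  have "h 0 \<notin> T"
  proof
    assume "h 0 \<in> T"
    then have "h (h 0) = h 0" using hT by blast
    then show False using inj[of "h 0" 0] h0 \<open>h 0 \<in> T\<close> by auto
  qed
  then have "h 0 = j"
    using hJ[of 0] h0 by auto
  with hi hT show ?thesis by blast
qed

lemma star_minor_eq_leaf_monomial:
  assumes T: "T \<subseteq> {1..m}" and i: "i \<in> {1..m} - T" and j: "j \<in> {1..m} - T" "i \<noteq> j"
  shows "\<exists>e. (e = 1 \<or> e = -1) \<and>
    det (submatrix (star_lap m) (insert 0 (insert i T)) (insert 0 (insert j T))) = e * (\<Prod>t\<in>T. Var t)"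
proof -
  let ?I = "insert 0 (insert i T)" and ?J = "insert 0 (insert j T)"
  define g where "g u = (if u = 0 then j else if u = i then 0 else u)" for u
  have T0: "0 \<notin> T" and fin: "finite T" using T finite_subset by auto
  have IJ: "?I \<subseteq> {..<m + 1}" "?J \<subseteq> {..<m + 1}" "card ?I = card ?J"
    using T i j T0 fin by auto
  have "inj_on g ?I" "g ` ?I = ?J"
    using i j T0 by (auto simp: g_def inj_on_def)
  then have g: "bij_betw g ?I ?J"
    unfolding bij_betw_def by simp
  have "\<forall>u\<in>?I. h u = g u" if "bij_betw h ?I ?J" "\<forall>u\<in>?I. star_lap m $$ (u, h u) \<noteq> 0" for h
    using star_nonzero_bij_unique[OF T i j that] by (auto simp: g_def)
  from det_submatrix_unique_bij[OF genlap_carrier IJ g this]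
  obtain e where "e = 1 \<or> e = -1" "det (submatrix (star_lap m) ?I ?J) = e * (\<Prod>u\<in>?I. star_lap m $$ (u, g u))"
    by blast
  moreover have "(\<Prod>u\<in>?I. star_lap m $$ (u, g u)) = (\<Prod>t\<in>T. Var t)"
  proof -
    have "(\<Prod>t\<in>T. star_lap m $$ (t, g t)) = (\<Prod>t\<in>T. Var t)"
      using T i T0 by (intro prod.cong) (auto simp: g_def genlap_star_entry)
    moreover have "star_lap m $$ (0, g 0) = -1" "star_lap m $$ (i, g i) = -1"
      using i j by (auto simp: g_def genlap_star_entry)
    ultimately show ?thesis
      using fin i T0 by simp
  qed
  ultimately show ?thesis by auto
qed

lemma leaf_monomial_in_crit_ideal:
  assumes T: "T \<subseteq> {1..m}" and k: "card T + 2 \<le> m"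
  shows "(\<Prod>t\<in>T. Var t) \<in> crit_ideal (m + 1) star_mu (card T + 2)"
proof -
  have fin: "finite T" and T0: "0 \<notin> T" using T finite_subset by auto
  have "2 \<le> card ({1..m} - T)"
    using card_Diff_subset[OF fin T] k by simp
  then obtain D where "D \<subseteq> {1..m} - T" "card D = 2"
    by (rule obtain_subset_with_card_n)
  then obtain i j where ij: "i \<in> {1..m} - T" "j \<in> {1..m} - T" "i \<noteq> j"
    by (auto simp: card_2_iff)
  let ?I = "insert 0 (insert i T)" and ?J = "insert 0 (insert j T)"
  obtain e where e: "e = 1 \<or> e = -1" and det: "det (submatrix (star_lap m) ?I ?J) = e * (\<Prod>t\<in>T. Var t)"
    using star_minor_eq_leaf_monomial[OF T ij] by blast
  have "?I \<subseteq> {..<m + 1}" "?J \<subseteq> {..<m + 1}" "card ?I = card T + 2" "card ?J = card T + 2"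
    using T ij fin T0 by auto
  then have "det (submatrix (star_lap m) ?I ?J) \<in> crit_ideal (m + 1) star_mu (card T + 2)"
    unfolding crit_ideal_def minors_carrier[OF genlap_carrier] by (intro ideal_gen_in) blast
  then have "e * det (submatrix (star_lap m) ?I ?J) \<in> crit_ideal (m + 1) star_mu (card T + 2)"
    unfolding crit_ideal_def by (rule ideal_gen_mult)
  then show ?thesis
    using e det by auto
qed

section \<open>The determinant of the star Laplacian\<close>

lemma star_perm_nonzero_cases:
  assumes p: "p permutes {0..<m + 1}" and nz: "\<forall>u<m + 1. star_lap m $$ (u, p u) \<noteq> 0"
  shows "p = id \<or> (\<exists>i\<in>{1..m}. p = Transposition.transpose 0 i)"
proof -
  have leaf: "p u = u \<or> p u = 0" if "u \<noteq> 0" for u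
  proof (cases "u < m + 1")
    case True
    then show ?thesis
      using genlap_star_nonzero[of u "m + 1" "p u"] nz that p by (auto simp: permutes_in_image)
  qed (use p in \<open>simp add: permutes_not_in\<close>)
  have inj: "u = v" if "p u = p v" for u v
    using permutes_inj[OF p] that by (auto dest: injD)
  show ?thesis
  proof (cases "p 0 = 0")
    case True
    have "p u = u" for u
      using leaf[of u] inj[of u 0] True by (cases "u = 0") auto
    then have "p = id"
      by (simp add: fun_eq_iff)
    then show ?thesis ..
  next
    case False
    define i where "i = p 0"
    have i: "i \<in> {1..m}"
      using False permutes_in_image[OF p, of 0] by (auto simp: i_def)
    have pi: "p i = 0"
      using leaf[of i] inj[of i 0] False by (auto simp: i_def)
    have "p u = Transposition.transpose 0 i u" for u
    proof (cases "u = 0 \<or> u = i")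
      case True
      then show ?thesis using pi by (auto simp: i_def)
    next
      case False
      then show ?thesis using leaf[of u] inj[of u i] pi by auto
    qed
    then show ?thesis
      using i by (auto simp: fun_eq_iff)
  qed
qed

lemma star_lap_diag_prod:
  "(\<Prod>u = 0..<m + 1. star_lap m $$ (u, u)) = Var 0 * (\<Prod>i\<in>{1..m}. Var i)"
proof -
  have "{0..<m + 1} = insert 0 {1..m}"
    by auto
  moreover have "(\<Prod>u\<in>{1..m}. star_lap m $$ (u, u)) = (\<Prod>u\<in>{1..m}. Var u)"
    by (intro prod.cong) (auto simp: genlap_star_entry)
  ultimately show ?thesis
    by (simp add: genlap_star_entry)
qed

lemma star_lap_transpose_prod:
  assumes "i \<in> {1..m}"
  shows "(\<Prod>u = 0..<m + 1. star_lap m $$ (u, Transposition.transpose 0 i u)) = (\<Prod>j\<in>{1..m} - {i}. Var j)"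
proof -
  let ?f = "\<lambda>u. star_lap m $$ (u, Transposition.transpose 0 i u)"
  have "{0..<m + 1} = insert 0 {1..m}"
    by auto
  then have "(\<Prod>u = 0..<m + 1. ?f u) = ?f 0 * (\<Prod>u\<in>{1..m}. ?f u)"
    by (simp only:) (rule prod.insert; simp)
  also have "(\<Prod>u\<in>{1..m}. ?f u) = ?f i * (\<Prod>u\<in>{1..m} - {i}. ?f u)"
    using assms by (rule prod.remove[OF finite_atLeastAtMost])
  finally have split: "(\<Prod>u = 0..<m + 1. ?f u) = ?f 0 * (?f i * (\<Prod>u\<in>{1..m} - {i}. ?f u))" .
  have "?f 0 = -1" "?f i = -1"
    using assms by (auto simp: genlap_star_entry)
  moreover have "(\<Prod>u\<in>{1..m} - {i}. ?f u) = (\<Prod>j\<in>{1..m} - {i}. Var j)"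
    by (intro prod.cong) (auto simp: genlap_star_entry)
  ultimately show ?thesis
    unfolding split by simp
qed

lemma det_star_lap:
  "det (star_lap m) = Var 0 * (\<Prod>i\<in>{1..m}. Var i) - (\<Sum>i\<in>{1..m}. \<Prod>j\<in>{1..m} - {i}. Var j)"
proof -
  define summand where "summand p = signof p * (\<Prod>u = 0..<m + 1. star_lap m $$ (u, p u))" for p
  define Q where "Q = insert id (Transposition.transpose 0 ` {1..m})"
  have "det (star_lap m) = sum summand {p. p permutes {0..<m + 1}}"
    unfolding det_def'[OF genlap_carrier] summand_def ..
  also have "\<dots> = sum summand Q"
  proof (rule sum.mono_neutral_right)
    show "Q \<subseteq> {p. p permutes {0..<m + 1}}"
      by (auto simp: Q_def intro!: permutes_swap_id)
    show "\<forall>p\<in>{p. p permutes {0..<m + 1}} - Q. summand p = 0"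
    proof
      fix p assume "p \<in> {p. p permutes {0..<m + 1}} - Q"
      then obtain u where u: "u < m + 1" "star_lap m $$ (u, p u) = 0"
        using star_perm_nonzero_cases[of p m] by (auto simp: Q_def)
      have "(\<Prod>v = 0..<m + 1. star_lap m $$ (v, p v)) = 0"
        by (rule prod_zero) (use u in auto)
      then show "summand p = 0"
        by (simp add: summand_def)
    qed
  qed (simp add: finite_permutations)
  also have "\<dots> = summand id + (\<Sum>i\<in>{1..m}. summand (Transposition.transpose 0 i))"
  proof -
    have "id \<notin> Transposition.transpose 0 ` {1..m}"
      by (auto dest: fun_cong[where x = 0])
    moreover have "inj_on (Transposition.transpose (0 :: nat)) {1..m}"
      by (rule inj_onI) (metis transpose_apply_first)
    ultimately show ?thesis
      by (simp add: Q_def sum.reindex)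
  qed
  also have "summand id = Var 0 * (\<Prod>i\<in>{1..m}. Var i)"
    unfolding summand_def id_apply star_lap_diag_prod by (simp add: signof_id)
  also have "(\<Sum>i\<in>{1..m}. summand (Transposition.transpose 0 i)) = (\<Sum>i\<in>{1..m}. - (\<Prod>j\<in>{1..m} - {i}. Var j))"
  proof (rule sum.cong)
    fix i assume "i \<in> {1..m}"
    then show "summand (Transposition.transpose 0 i) = - (\<Prod>j\<in>{1..m} - {i}. Var j)"
      unfolding summand_def star_lap_transpose_prod[OF \<open>i \<in> {1..m}\<close>] by (simp add: sign_swap_id)
  qed simp
  finally show ?thesis
    by (simp add: sum_negf)
qed

section \<open>The critical ideals of the star\<close>

lemma crit_ideal_star_top:
  "crit_ideal (m + 1) star_mu (m + 1) =
    ideal_gen {Var 0 * (\<Prod>i\<in>{1..m}. Var i) - (\<Sum>i\<in>{1..m}. \<Prod>j\<in>{1..m} - {i}. Var j)}"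
  unfolding crit_ideal_def minors_full[OF genlap_carrier] det_star_lap ..

lemma crit_ideal_star_leaf_monomials:
  assumes "k + 2 \<le> m"
  shows "crit_ideal (m + 1) star_mu (k + 2) = ideal_gen (leaf_monomials m k)"
proof
  show "crit_ideal (m + 1) star_mu (k + 2) \<subseteq> ideal_gen (leaf_monomials m k)"
    using crit_ideal_star_subset[of m "k + 2"] by simp
  show "ideal_gen (leaf_monomials m k) \<subseteq> crit_ideal (m + 1) star_mu (k + 2)"
    unfolding crit_ideal_def
  proof (rule ideal_gen_least, rule subsetI)
    fix x assume "x \<in> leaf_monomials m k"
    then obtain T where "T \<subseteq> {1..m}" "card T = k" "x = (\<Prod>t\<in>T. Var t)"
      unfolding leaf_monomials_def by blast
    then show "x \<in> ideal_gen (minors (star_lap m) (k + 2))"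
      using leaf_monomial_in_crit_ideal[of T m] assms unfolding crit_ideal_def by simp
  qed
qed

lemma const_coeff_leaf_monomials:
  assumes "1 \<le> k" "s \<in> leaf_monomials m k"
  shows "const_coeff s = 0"
proof -
  obtain J where J: "J \<subseteq> {1..m}" "card J = k" "s = (\<Prod>j\<in>J. Var j)"
    using assms(2) unfolding leaf_monomials_def by blast
  then have "finite J" "J \<noteq> {}"
    using assms(1) finite_subset[OF J(1)] by auto
  then show ?thesis
    by (simp add: J(3) const_coeff_prod const_coeff_Var card_gt_0_iff)
qed

lemma crit_ideal_star_proper:
  assumes "3 \<le> s"
  shows "crit_ideal (m + 1) star_mu s \<noteq> UNIV"
proof
  assume "crit_ideal (m + 1) star_mu s = UNIV"
  then have "1 \<in> ideal_gen (leaf_monomials m (s - 2))"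
    using crit_ideal_star_subset by blast
  have "const_coeff 1 = 0"
  proof (rule const_coeff_ideal_gen)
    show "const_coeff p = 0" if "p \<in> leaf_monomials m (s - 2)" for p
      using const_coeff_leaf_monomials[OF _ that] assms by simp
  qed fact
  then show False
    by (simp add: const_coeff_one)
qed

lemma algco_star:
  assumes "2 \<le> m"
  shows "algco (m + 1) star_mu = 2"
  unfolding algco_def
proof (rule Greatest_equality)
  have "1 \<in> crit_ideal (m + 1) star_mu 2"
    using leaf_monomial_in_crit_ideal[of "{}" m] assms by (simp add: numeral_2_eq_2)
  then show "crit_ideal (m + 1) star_mu 2 = UNIV"
    unfolding crit_ideal_def by (rule ideal_gen_eq_UNIV)
  show "y \<le> 2" if "crit_ideal (m + 1) star_mu y = UNIV" for y
    using crit_ideal_star_proper[of y m] that by linarith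
qed

theorem theorem5p1:
  fixes m :: nat
  assumes "m \<ge> 3"
  shows "algco (m + 1) star_mu = 2
    \<and> (\<forall>k. 1 \<le> k \<and> k \<le> m - 2 \<longrightarrow>
         crit_ideal (m + 1) star_mu (2 + k) =
           ideal_gen {(\<Prod>s\<in>J. Var s) | J. J \<subseteq> {1..m} \<and> card J = k})
    \<and> crit_ideal (m + 1) star_mu (m + 1) =
        ideal_gen {Var 0 * (\<Prod>i\<in>{1..m}. Var i) - (\<Sum>i\<in>{1..m}. \<Prod>j\<in>{1..m} - {i}. Var j)}"
proof (intro conjI allI impI)
  show "algco (m + 1) star_mu = 2"
    using assms by (intro algco_star) simp
next
  fix k assume "1 \<le> k \<and> k \<le> m - 2"
  then have "k + 2 \<le> m"
    using assms by linarith
  then show "crit_ideal (m + 1) star_mu (2 + k) =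
      ideal_gen {(\<Prod>s\<in>J. Var s) | J. J \<subseteq> {1..m} \<and> card J = k}"
    using crit_ideal_star_leaf_monomials[of k m] by (simp add: leaf_monomials_def add.commute)
next
  show "crit_ideal (m + 1) star_mu (m + 1) =
      ideal_gen {Var 0 * (\<Prod>i\<in>{1..m}. Var i) - (\<Sum>i\<in>{1..m}. \<Prod>j\<in>{1..m} - {i}. Var j)}"
    by (rule crit_ideal_star_top)
qed

end
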